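(* Let $\mathcal{N}$ be a finite factor with faithful normal tracial state $\tau_{\mathcal{N}}$, $n\in\mathbb{N}$, $\mathbb{M}_n=\mathrm{Mat}_n(\mathbb{C})$, $\mathcal{M}=\mathbb{M}_n\otimes\mathcal{N}\cong\mathrm{Mat}_n(\mathcal{N})$ with tracial state $\tau_{\mathcal{M}}=\frac1n\mathrm{Tr}\otimes\tau_{\mathcal{N}}$. Let $\mathcal{U}_n^{per}\subseteq\mathbb{M}_n$ be the group of permutation matrices and $\mathbb{D}_n\subseteq\mathbb{M}_n$ the diagonal matrices. If $a\in\mathbb{D}_n\otimes\mathbf{1}_{\mathcal{N}}$, then $$\sup_{u\in\mathcal{U}(\mathcal{M})}\|a-u^*au\|_2=\max_{u\in\mathcal{U}_n^{per}\otimes\mathbf{1}_{\mathcal{N}}}\|a-u^*au\|_2.$$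
   Context: $\|x\|_2=\tau_{\mathcal{M}}(x^*x)^{1/2}$; $\mathcal{U}(\mathcal{M})$ is the unitary group of $\mathcal{M}$. The identification $\mathrm{Mat}_n(\mathcal{N})\to\mathbb{M}_n\otimes\mathcal{N}$ is $(a_{ij})\mapsto\sum_{i,j}\alpha_{ij}\otimes a_{ij}$ with $\alpha_{ij}$ the matrix units. *)

theory Defs
  imports "HOL-Analysis.Analysis"
begin

record 'a salg =
  acar  :: "'a set"
  azero :: 'a
  aone  :: 'a
  aadd  :: "'a \<Rightarrow> 'a \<Rightarrow> 'a"
  amul  :: "'a \<Rightarrow> 'a \<Rightarrow> 'a"
  asc   :: "complex \<Rightarrow> 'a \<Rightarrow> 'a"
  astar :: "'a \<Rightarrow> 'a"
  anorm :: "'a \<Rightarrow> real"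

definition asub :: "'a salg \<Rightarrow> 'a \<Rightarrow> 'a \<Rightarrow> 'a" where
  "asub A x y = aadd A x (asc A (-1) y)"

definition star_algebra :: "'a salg \<Rightarrow> bool" where
  "star_algebra A \<longleftrightarrow>
     azero A \<in> acar A \<and> aone A \<in> acar A \<and> aone A \<noteq> azero A \<and>
     (\<forall>x\<in>acar A. \<forall>y\<in>acar A. aadd A x y \<in> acar A \<and> amul A x y \<in> acar A) \<and>
     (\<forall>c. \<forall>x\<in>acar A. asc A c x \<in> acar A) \<and>
     (\<forall>x\<in>acar A. astar A x \<in> acar A) \<and>
     (\<forall>x\<in>acar A. \<forall>y\<in>acar A. \<forall>z\<in>acar A. aadd A (aadd A x y) z = aadd A x (aadd A y z)) \<and>
     (\<forall>x\<in>acar A. \<forall>y\<in>acar A. aadd A x y = aadd A y x) \<and>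
     (\<forall>x\<in>acar A. aadd A x (azero A) = x) \<and>
     (\<forall>x\<in>acar A. aadd A x (asc A (-1) x) = azero A) \<and>
     (\<forall>x\<in>acar A. asc A 1 x = x) \<and>
     (\<forall>a b. \<forall>x\<in>acar A. asc A a (asc A b x) = asc A (a * b) x) \<and>
     (\<forall>a b. \<forall>x\<in>acar A. asc A (a + b) x = aadd A (asc A a x) (asc A b x)) \<and>
     (\<forall>a. \<forall>x\<in>acar A. \<forall>y\<in>acar A. asc A a (aadd A x y) = aadd A (asc A a x) (asc A a y)) \<and>
     (\<forall>x\<in>acar A. \<forall>y\<in>acar A. \<forall>z\<in>acar A. amul A (amul A x y) z = amul A x (amul A y z)) \<and>
     (\<forall>x\<in>acar A. amul A (aone A) x = x \<and> amul A x (aone A) = x) \<and>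
     (\<forall>x\<in>acar A. \<forall>y\<in>acar A. \<forall>z\<in>acar A.
        amul A x (aadd A y z) = aadd A (amul A x y) (amul A x z) \<and>
        amul A (aadd A x y) z = aadd A (amul A x z) (amul A y z)) \<and>
     (\<forall>a. \<forall>x\<in>acar A. \<forall>y\<in>acar A.
        amul A (asc A a x) y = asc A a (amul A x y) \<and> amul A x (asc A a y) = asc A a (amul A x y)) \<and>
     (\<forall>x\<in>acar A. astar A (astar A x) = x) \<and>
     (\<forall>x\<in>acar A. \<forall>y\<in>acar A. astar A (aadd A x y) = aadd A (astar A x) (astar A y)) \<and>
     (\<forall>a. \<forall>x\<in>acar A. astar A (asc A a x) = asc A (cnj a) (astar A x)) \<and>
     (\<forall>x\<in>acar A. \<forall>y\<in>acar A. astar A (amul A x y) = amul A (astar A y) (astar A x))"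

definition cstar_algebra :: "'a salg \<Rightarrow> bool" where
  "cstar_algebra A \<longleftrightarrow> star_algebra A \<and>
     (\<forall>x\<in>acar A. anorm A x \<ge> 0 \<and> (anorm A x = 0 \<longleftrightarrow> x = azero A)) \<and>
     (\<forall>x\<in>acar A. \<forall>y\<in>acar A. anorm A (aadd A x y) \<le> anorm A x + anorm A y) \<and>
     (\<forall>c. \<forall>x\<in>acar A. anorm A (asc A c x) = cmod c * anorm A x) \<and>
     (\<forall>x\<in>acar A. \<forall>y\<in>acar A. anorm A (amul A x y) \<le> anorm A x * anorm A y) \<and>
     (\<forall>x\<in>acar A. anorm A (amul A (astar A x) x) = (anorm A x)\<^sup>2) \<and>
     (\<forall>X. (\<forall>k. X k \<in> acar A) \<and>
          (\<forall>e>0. \<exists>N. \<forall>m\<ge>N. \<forall>k\<ge>N. anorm A (asub A (X m) (X k)) < e) \<longrightarrow>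
          (\<exists>x\<in>acar A. (\<lambda>k. anorm A (asub A (X k) x)) \<longlonglongrightarrow> 0))"

section \<open>Continuous dual and W*-algebras (Sakai: C*-algebras that are dual Banach spaces)\<close>

definition bdd_lin_functional :: "'a salg \<Rightarrow> ('a \<Rightarrow> complex) \<Rightarrow> bool" where
  "bdd_lin_functional A f \<longleftrightarrow>
     (\<forall>x\<in>acar A. \<forall>y\<in>acar A. f (aadd A x y) = f x + f y) \<and>
     (\<forall>c. \<forall>x\<in>acar A. f (asc A c x) = c * f x) \<and>
     (\<forall>x. x \<notin> acar A \<longrightarrow> f x = 0) \<and>
     (\<exists>C. \<forall>x\<in>acar A. cmod (f x) \<le> C * anorm A x)"

definition fnorm :: "'a salg \<Rightarrow> ('a \<Rightarrow> complex) \<Rightarrow> real" where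
  "fnorm A f = Sup ((\<lambda>x. cmod (f x)) ` {x \<in> acar A. anorm A x \<le> 1})"

text \<open>F is (an isometric copy inside the dual A* of) a predual of A:
  F is a norm-closed subspace of A*, and the canonical map a \<mapsto> (f \<mapsto> f a)
  is an isometry of A onto the Banach dual F*.\<close>
definition predual :: "'a salg \<Rightarrow> ('a \<Rightarrow> complex) set \<Rightarrow> bool" where
  "predual A F \<longleftrightarrow>
     (\<forall>f\<in>F. bdd_lin_functional A f) \<and>
     (\<forall>f\<in>F. \<forall>g\<in>F. (\<lambda>x. f x + g x) \<in> F) \<and>
     (\<forall>c. \<forall>f\<in>F. (\<lambda>x. c * f x) \<in> F) \<and>
     (\<forall>g fs. bdd_lin_functional A g \<and> (\<forall>k. fs k \<in> F) \<and>
          (\<lambda>k. fnorm A (\<lambda>x. fs k x - g x)) \<longlonglongrightarrow> 0 \<longrightarrow> g \<in> F) \<and>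
     (\<forall>a\<in>acar A. anorm A a = Sup ((\<lambda>f. cmod (f a)) ` {f \<in> F. fnorm A f \<le> 1})) \<and>
     (\<forall>\<phi> :: ('a \<Rightarrow> complex) \<Rightarrow> complex.
        (\<forall>f\<in>F. \<forall>g\<in>F. \<phi> (\<lambda>x. f x + g x) = \<phi> f + \<phi> g) \<and>
        (\<forall>c. \<forall>f\<in>F. \<phi> (\<lambda>x. c * f x) = c * \<phi> f) \<and>
        (\<exists>C. \<forall>f\<in>F. cmod (\<phi> f) \<le> C * fnorm A f) \<longrightarrow>
        (\<exists>a\<in>acar A. \<forall>f\<in>F. \<phi> f = f a))"

definition wstar_algebra :: "'a salg \<Rightarrow> bool" where
  "wstar_algebra A \<longleftrightarrow> cstar_algebra A \<and> (\<exists>F. predual A F)"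

text \<open>Normal functionals on a W*-algebra = elements of the (unique) predual.\<close>
definition normal_functional :: "'a salg \<Rightarrow> ('a \<Rightarrow> complex) \<Rightarrow> bool" where
  "normal_functional A f \<longleftrightarrow> (\<exists>F. predual A F \<and> f \<in> F)"

definition factor :: "'a salg \<Rightarrow> bool" where
  "factor A \<longleftrightarrow> wstar_algebra A \<and>
     (\<forall>z\<in>acar A. (\<forall>x\<in>acar A. amul A z x = amul A x z) \<longrightarrow> (\<exists>c. z = asc A c (aone A)))"

definition faithful_normal_tracial_state :: "'a salg \<Rightarrow> ('a \<Rightarrow> complex) \<Rightarrow> bool" where
  "faithful_normal_tracial_state A tau \<longleftrightarrow>
     bdd_lin_functional A tau \<and>
     (\<forall>x\<in>acar A. Im (tau (amul A (astar A x) x)) = 0 \<and> Re (tau (amul A (astar A x) x)) \<ge> 0) \<and>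
     tau (aone A) = 1 \<and>
     (\<forall>x\<in>acar A. \<forall>y\<in>acar A. tau (amul A x y) = tau (amul A y x)) \<and>
     (\<forall>x\<in>acar A. tau (amul A (astar A x) x) = 0 \<longrightarrow> x = azero A) \<and>
     normal_functional A tau"

definition finite_factor_with_trace :: "'a salg \<Rightarrow> ('a \<Rightarrow> complex) \<Rightarrow> bool" where
  "finite_factor_with_trace A tau \<longleftrightarrow> factor A \<and> faithful_normal_tracial_state A tau"

section \<open>n x n matrices over A, i.e. M_n \<otimes> N = Mat_n(N)\<close>

primrec asum :: "'a salg \<Rightarrow> (nat \<Rightarrow> 'a) \<Rightarrow> nat \<Rightarrow> 'a" where
  "asum A f 0 = azero A"
| "asum A f (Suc k) = aadd A (asum A f k) (f k)"

definition mats :: "'a salg \<Rightarrow> nat \<Rightarrow> (nat \<Rightarrow> nat \<Rightarrow> 'a) set" where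
  "mats A n = {x. \<forall>i j. if i < n \<and> j < n then x i j \<in> acar A else x i j = azero A}"

definition mmul :: "'a salg \<Rightarrow> nat \<Rightarrow> (nat \<Rightarrow> nat \<Rightarrow> 'a) \<Rightarrow> (nat \<Rightarrow> nat \<Rightarrow> 'a) \<Rightarrow> (nat \<Rightarrow> nat \<Rightarrow> 'a)" where
  "mmul A n x y = (\<lambda>i j. if i < n \<and> j < n then asum A (\<lambda>k. amul A (x i k) (y k j)) n else azero A)"

definition madj :: "'a salg \<Rightarrow> nat \<Rightarrow> (nat \<Rightarrow> nat \<Rightarrow> 'a) \<Rightarrow> (nat \<Rightarrow> nat \<Rightarrow> 'a)" where
  "madj A n x = (\<lambda>i j. if i < n \<and> j < n then astar A (x j i) else azero A)"

definition msub :: "'a salg \<Rightarrow> nat \<Rightarrow> (nat \<Rightarrow> nat \<Rightarrow> 'a) \<Rightarrow> (nat \<Rightarrow> nat \<Rightarrow> 'a) \<Rightarrow> (nat \<Rightarrow> nat \<Rightarrow> 'a)" where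
  "msub A n x y = (\<lambda>i j. if i < n \<and> j < n then asub A (x i j) (y i j) else azero A)"

definition mone :: "'a salg \<Rightarrow> nat \<Rightarrow> (nat \<Rightarrow> nat \<Rightarrow> 'a)" where
  "mone A n = (\<lambda>i j. if i < n \<and> j < n \<and> i = j then aone A else azero A)"

definition munitaries :: "'a salg \<Rightarrow> nat \<Rightarrow> (nat \<Rightarrow> nat \<Rightarrow> 'a) set" where
  "munitaries A n = {u \<in> mats A n. mmul A n (madj A n u) u = mone A n \<and> mmul A n u (madj A n u) = mone A n}"

definition mtau :: "('a \<Rightarrow> complex) \<Rightarrow> nat \<Rightarrow> (nat \<Rightarrow> nat \<Rightarrow> 'a) \<Rightarrow> complex" where
  "mtau tau n x = (1 / of_nat n) * (\<Sum>i<n. tau (x i i))"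

definition mnorm2 :: "'a salg \<Rightarrow> ('a \<Rightarrow> complex) \<Rightarrow> nat \<Rightarrow> (nat \<Rightarrow> nat \<Rightarrow> 'a) \<Rightarrow> real" where
  "mnorm2 A tau n x = sqrt (Re (mtau tau n (mmul A n (madj A n x) x)))"

definition diag_tensor_one :: "'a salg \<Rightarrow> nat \<Rightarrow> (nat \<Rightarrow> complex) \<Rightarrow> (nat \<Rightarrow> nat \<Rightarrow> 'a)" where
  "diag_tensor_one A n lam = (\<lambda>i j. if i < n \<and> j < n \<and> i = j then asc A (lam i) (aone A) else azero A)"

definition perm_tensor_one :: "'a salg \<Rightarrow> nat \<Rightarrow> (nat \<Rightarrow> nat) \<Rightarrow> (nat \<Rightarrow> nat \<Rightarrow> 'a)" where
  "perm_tensor_one A n \<sigma> = (\<lambda>i j. if i < n \<and> j < n \<and> j = \<sigma> i then aone A else azero A)"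

definition comm_dist :: "'a salg \<Rightarrow> ('a \<Rightarrow> complex) \<Rightarrow> nat \<Rightarrow> (nat \<Rightarrow> nat \<Rightarrow> 'a) \<Rightarrow> (nat \<Rightarrow> nat \<Rightarrow> 'a) \<Rightarrow> real" where
  "comm_dist A tau n a u = mnorm2 A tau n (msub A n a (mmul A n (madj A n u) (mmul A n a u)))"

end

theory Submission
  imports Defs
begin

(* For a = diag(lam) tensor 1 and a unitary u = (u_kj) of Mat_n(N) one computes
     ||a - u^* a u||_2^2 = (1/n) sum_{k,j} |lam_j - lam_k|^2 p_kj,   p_kj = tau(u_kj^* u_kj).
   Unitarity and the trace property make p doubly stochastic, so the right-hand side is a linear
   functional evaluated at a point of the Birkhoff polytope, hence bounded by its value at some
   permutation matrix; and permutation matrices tensor 1 are unitaries of Mat_n(N).  The permutation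
   is found by repeatedly peeling off a permutation matrix supported on the positive entries of p,
   which exists by Hall's marriage theorem. *)

lemma sdr_extend_tight:
  assumes "S \<subseteq> I"
    and "\<exists>f1. inj_on f1 S \<and> (\<forall>i\<in>S. f1 i \<in> A i)"
    and "\<exists>f2. inj_on f2 (I - S) \<and> (\<forall>i\<in>I - S. f2 i \<in> A i - \<Union>(A ` S))"
  shows "\<exists>f. inj_on f I \<and> (\<forall>i\<in>I. f i \<in> A i)"
proof -
  obtain f1 f2 where f1: "inj_on f1 S" "\<forall>i\<in>S. f1 i \<in> A i"
    and f2: "inj_on f2 (I - S)" "\<forall>i\<in>I - S. f2 i \<in> A i - \<Union>(A ` S)"
    using assms(2,3) by blast
  define f where "f i = (if i \<in> S then f1 i else f2 i)" for i
  have "f ` S \<subseteq> \<Union>(A ` S)" "f ` (I - S) \<inter> \<Union>(A ` S) = {}"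
    using f1(2) f2(2) by (auto simp: f_def)
  then have "inj_on f (S \<union> (I - S))"
    using f1(1) f2(1) by (intro inj_on_Un[THEN iffD2]) (auto simp: f_def inj_on_def)
  moreover have "S \<union> (I - S) = I" using assms(1) by blast
  moreover have "\<forall>i\<in>I. f i \<in> A i" using f1(2) f2(2) by (auto simp: f_def)
  ultimately show ?thesis by metis
qed

lemma hall_condition_Diff_tight:
  assumes "finite I" "\<forall>i\<in>I. finite (A i)" "\<forall>S\<subseteq>I. card S \<le> card (\<Union>(A ` S))"
    and "S \<subseteq> I" "card (\<Union>(A ` S)) = card S"
    and "T \<subseteq> I - S"
  shows "card T \<le> card (\<Union>i\<in>T. A i - \<Union>(A ` S))"
proof -
  have fin: "finite (\<Union>(A ` U))" if "U \<subseteq> I" for U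
    using that assms(1,2) by (meson finite_UN_I finite_subset subsetD)
  have "(\<Union>i\<in>T. A i - \<Union>(A ` S)) = \<Union>(A ` (T \<union> S)) - \<Union>(A ` S)" by blast
  then have "card (\<Union>i\<in>T. A i - \<Union>(A ` S)) = card (\<Union>(A ` (T \<union> S))) - card (\<Union>(A ` S))"
    using fin assms(4,6) by (simp add: card_Diff_subset Un_mono)
  moreover have "T \<union> S \<subseteq> I" using assms(4,6) by blast
  then have "card (T \<union> S) \<le> card (\<Union>(A ` (T \<union> S)))" using assms(3) by blast
  moreover have "card (T \<union> S) = card T + card S"
    using assms(1,4,6) by (intro card_Un_disjoint) (auto dest: finite_subset)
  ultimately show ?thesis using assms(5) by linarith
qed

lemma hall_condition_remove_point:
  assumes hall: "\<forall>S\<subseteq>I. card S \<le> card (\<Union>(A ` S))"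
    and no_tight: "\<nexists>S. S \<subseteq> I \<and> S \<noteq> {} \<and> S \<noteq> I \<and> card (\<Union>(A ` S)) = card S"
    and "i0 \<in> I" "T \<subseteq> I - {i0}"
  shows "card T \<le> card (\<Union>i\<in>T. A i - {x})"
proof (cases "T = {}")
  case False
  then have "card T \<le> card (\<Union>(A ` T))" "card (\<Union>(A ` T)) \<noteq> card T"
    using hall no_tight assms(3,4) by blast+
  moreover have "(\<Union>i\<in>T. A i - {x}) = \<Union>(A ` T) - {x}" by blast
  ultimately show ?thesis by (auto simp: card_Diff_singleton_if)
qed simp

lemma sdr_extend_point:
  assumes "i0 \<in> I" "x \<in> A i0"
    and "\<exists>f. inj_on f (I - {i0}) \<and> (\<forall>i\<in>I - {i0}. f i \<in> A i - {x})"
  shows "\<exists>g. inj_on g I \<and> (\<forall>i\<in>I. g i \<in> A i)"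
proof -
  obtain f where f: "inj_on f (I - {i0})" "\<forall>i\<in>I - {i0}. f i \<in> A i - {x}"
    using assms(3) by blast
  have "inj_on (f(i0 := x)) (insert i0 (I - {i0}))"
    using f by (auto simp: inj_on_def)
  moreover have "insert i0 (I - {i0}) = I" using assms(1) by blast
  moreover have "\<forall>i\<in>I. (f(i0 := x)) i \<in> A i" using assms(2) f(2) by auto
  ultimately show ?thesis by metis
qed

theorem hall_marriage:
  assumes "finite I" "\<forall>i\<in>I. finite (A i)" "\<forall>S\<subseteq>I. card S \<le> card (\<Union>(A ` S))"
  shows "\<exists>f. inj_on f I \<and> (\<forall>i\<in>I. f i \<in> A i)"
  using assms
proof (induction "card I" arbitrary: I A rule: less_induct)
  case less
  note fin = less.prems(1,2) and hall = less.prems(3)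
  consider (empty) "I = {}"
    | (tight) S where "S \<subseteq> I" "S \<noteq> {}" "S \<noteq> I" "card (\<Union>(A ` S)) = card S"
    | (no_tight) i0 where "i0 \<in> I"
        "\<nexists>S. S \<subseteq> I \<and> S \<noteq> {} \<and> S \<noteq> I \<and> card (\<Union>(A ` S)) = card S"
    by blast
  then show ?case
  proof cases
    case empty
    then show ?thesis by simp
  next
    case tight
    have "finite S" "finite (I - S)" using fin(1) tight(1) finite_subset by auto
    have "card S < card I" using fin(1) tight(1,3) by (intro psubset_card_mono) auto
    have "card (I - S) < card I" using fin(1) tight(1,2) by (intro psubset_card_mono) auto
    have "\<exists>f1. inj_on f1 S \<and> (\<forall>i\<in>S. f1 i \<in> A i)"
      using less.hyps[OF \<open>card S < card I\<close> \<open>finite S\<close>, of A] fin(2) hall tight(1) by blast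
    moreover have "\<exists>f2. inj_on f2 (I - S) \<and> (\<forall>i\<in>I - S. f2 i \<in> A i - \<Union>(A ` S))"
      using less.hyps[OF \<open>card (I - S) < card I\<close> \<open>finite (I - S)\<close>, of "\<lambda>i. A i - \<Union>(A ` S)"] fin(2)
        hall_condition_Diff_tight[OF fin hall tight(1,4)] by blast
    ultimately show ?thesis by (rule sdr_extend_tight[OF tight(1)])
  next
    case no_tight
    have "card {i0} \<le> card (\<Union>(A ` {i0}))" using hall no_tight(1) by blast
    then obtain x where x: "x \<in> A i0" by fastforce
    have "card (I - {i0}) < card I" using fin(1) no_tight(1) by (rule card_Diff1_less)
    then have "\<exists>f. inj_on f (I - {i0}) \<and> (\<forall>i\<in>I - {i0}. f i \<in> A i - {x})"
      using less.hyps[of "I - {i0}" "\<lambda>i. A i - {x}"] fin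
        hall_condition_remove_point[OF hall no_tight(2,1)] by blast
    then show ?thesis by (rule sdr_extend_point[where A = A, OF no_tight(1) x])
  qed
qed

definition scaled_doubly_stochastic :: "nat \<Rightarrow> real \<Rightarrow> (nat \<Rightarrow> nat \<Rightarrow> real) \<Rightarrow> bool" where
  "scaled_doubly_stochastic n c p \<longleftrightarrow>
     (\<forall>i<n. \<forall>j<n. 0 \<le> p i j) \<and> (\<forall>i<n. (\<Sum>j<n. p i j) = c) \<and> (\<forall>j<n. (\<Sum>i<n. p i j) = c)"

lemma scaled_doubly_stochastic_sum_nonneg:
  assumes "scaled_doubly_stochastic n c p" "0 < n"
  shows "0 \<le> c"
proof -
  have "0 \<le> (\<Sum>j<n. p 0 j)" using assms by (intro sum_nonneg) (auto simp: scaled_doubly_stochastic_def)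
  then show ?thesis using assms by (simp add: scaled_doubly_stochastic_def)
qed

lemma scaled_doubly_stochastic_zero:
  assumes "scaled_doubly_stochastic n 0 p" "i < n" "j < n"
  shows "p i j = 0"
  using assms sum_nonneg_eq_0_iff[of "{..<n}" "p i"] by (auto simp: scaled_doubly_stochastic_def)

lemma scaled_doubly_stochastic_hall_condition:
  assumes p: "scaled_doubly_stochastic n c p" and "0 < c" and S: "S \<subseteq> {..<n}"
  shows "card S \<le> card (\<Union>i\<in>S. {j. j < n \<and> 0 < p i j})"
proof -
  define U where "U = (\<Union>i\<in>S. {j. j < n \<and> 0 < p i j})"
  have U: "U \<subseteq> {..<n}" by (auto simp: U_def)
  have nonneg: "0 \<le> p i j" if "i < n" "j < n" for i j
    using p that by (simp add: scaled_doubly_stochastic_def)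
  have "c * card S = (\<Sum>i\<in>S. \<Sum>j<n. p i j)"
    using p S by (auto simp: scaled_doubly_stochastic_def subset_iff)
  also have "\<dots> = (\<Sum>i\<in>S. \<Sum>j\<in>U. p i j)"
  proof (rule sum.cong[OF refl])
    fix i assume "i \<in> S"
    then have "\<forall>j\<in>{..<n} - U. p i j = 0" using S nonneg by (force simp: U_def)
    then show "(\<Sum>j<n. p i j) = (\<Sum>j\<in>U. p i j)" using U by (intro sum.mono_neutral_right) auto
  qed
  also have "\<dots> = (\<Sum>j\<in>U. \<Sum>i\<in>S. p i j)" by (rule sum.swap)
  also have "\<dots> \<le> (\<Sum>j\<in>U. \<Sum>i<n. p i j)"
    using S U nonneg by (intro sum_mono sum_mono2) auto
  also have "\<dots> = c * card U"
    using p U by (auto simp: scaled_doubly_stochastic_def subset_iff)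
  finally show ?thesis using \<open>0 < c\<close> by (simp add: U_def)
qed

lemma scaled_doubly_stochastic_positive_diagonal:
  assumes p: "scaled_doubly_stochastic n c p" and "0 < c"
  obtains \<sigma> where "\<sigma> permutes {..<n}" "\<forall>i<n. 0 < p i (\<sigma> i)"
proof -
  obtain f where f: "inj_on f {..<n}" "\<forall>i<n. f i < n \<and> 0 < p i (f i)"
    using hall_marriage[of "{..<n}" "\<lambda>i. {j. j < n \<and> 0 < p i j}"]
      scaled_doubly_stochastic_hall_condition[OF assms] by auto
  define \<sigma> where "\<sigma> i = (if i < n then f i else i)" for i
  have "inj_on \<sigma> {..<n}" using f(1) by (auto simp: inj_on_def \<sigma>_def)
  moreover have "\<sigma> ` {..<n} \<subseteq> {..<n}" using f(2) by (auto simp: \<sigma>_def)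
  ultimately have "bij_betw \<sigma> {..<n} {..<n}" by (simp add: bij_betw_def endo_inj_surj)
  then have "\<sigma> permutes {..<n}" by (rule bij_imp_permutes) (simp add: \<sigma>_def)
  moreover have "\<forall>i<n. 0 < p i (\<sigma> i)" using f(2) by (simp add: \<sigma>_def)
  ultimately show thesis by (rule that)
qed

lemma scaled_doubly_stochastic_peel:
  assumes p: "scaled_doubly_stochastic n c p" and "0 < n" "0 < c"
  obtains \<sigma> \<theta> where "\<sigma> permutes {..<n}" "0 < \<theta>"
    "scaled_doubly_stochastic n (c - \<theta>) (\<lambda>i j. p i j - (if j = \<sigma> i then \<theta> else 0))"
    "card {(i, j). i < n \<and> j < n \<and> p i j - (if j = \<sigma> i then \<theta> else 0) \<noteq> 0}
       < card {(i, j). i < n \<and> j < n \<and> p i j \<noteq> 0}"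
proof -
  obtain \<sigma> where \<sigma>: "\<sigma> permutes {..<n}" "\<forall>i<n. 0 < p i (\<sigma> i)"
    using scaled_doubly_stochastic_positive_diagonal[OF p \<open>0 < c\<close>] by blast
  have \<sigma>_less: "\<sigma> i < n" if "i < n" for i using permutes_in_image[OF \<sigma>(1)] that by simp
  define \<theta> where "\<theta> = Min ((\<lambda>i. p i (\<sigma> i)) ` {..<n})"
  have "\<theta> \<in> (\<lambda>i. p i (\<sigma> i)) ` {..<n}" unfolding \<theta>_def using \<open>0 < n\<close> by (intro Min_in) auto
  then obtain i0 where i0: "i0 < n" "\<theta> = p i0 (\<sigma> i0)" by auto
  have \<theta>_le: "\<theta> \<le> p i (\<sigma> i)" if "i < n" for i unfolding \<theta>_def using that by (intro Min_le) auto
  define q where "q i j = p i j - (if j = \<sigma> i then \<theta> else 0)" for i j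
  have row_delta: "(\<Sum>j<n. if j = \<sigma> i then \<theta> else 0) = \<theta>" if "i < n" for i
    using \<sigma>_less[OF that] by simp
  have col_delta: "(\<Sum>i<n. if j = \<sigma> i then \<theta> else 0) = \<theta>" if "j < n" for j
    using sum.permute[OF \<sigma>(1), of "\<lambda>k. if j = k then \<theta> else 0"] that by simp
  have "scaled_doubly_stochastic n (c - \<theta>) q"
    using p \<theta>_le row_delta col_delta
    by (auto simp: scaled_doubly_stochastic_def q_def sum_subtractf)
  moreover have "card {(i, j). i < n \<and> j < n \<and> q i j \<noteq> 0} < card {(i, j). i < n \<and> j < n \<and> p i j \<noteq> 0}"
  proof (rule psubset_card_mono)
    show "finite {(i, j). i < n \<and> j < n \<and> p i j \<noteq> 0}"
      by (rule finite_subset[of _ "{..<n} \<times> {..<n}"]) auto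
    have "(i0, \<sigma> i0) \<in> {(i, j). i < n \<and> j < n \<and> p i j \<noteq> 0} - {(i, j). i < n \<and> j < n \<and> q i j \<noteq> 0}"
      using i0 \<sigma> \<sigma>_less by (auto simp: q_def)
    moreover have "{(i, j). i < n \<and> j < n \<and> q i j \<noteq> 0} \<subseteq> {(i, j). i < n \<and> j < n \<and> p i j \<noteq> 0}"
      using \<sigma>(2) by (auto simp: q_def)
    ultimately show "{(i, j). i < n \<and> j < n \<and> q i j \<noteq> 0} \<subset> {(i, j). i < n \<and> j < n \<and> p i j \<noteq> 0}"
      by blast
  qed
  moreover have "0 < \<theta>" using i0 \<sigma>(2) by simp
  ultimately show thesis using that \<sigma>(1) unfolding q_def by blast
qed

lemma weighted_sum_split_permutation:
  fixes W p :: "nat \<Rightarrow> nat \<Rightarrow> real"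
  assumes "\<sigma> permutes {..<n}"
  shows "(\<Sum>i<n. \<Sum>j<n. W i j * p i j)
    = (\<Sum>i<n. \<Sum>j<n. W i j * (p i j - (if j = \<sigma> i then \<theta> else 0))) + \<theta> * (\<Sum>i<n. W i (\<sigma> i))"
proof -
  have "(\<Sum>j<n. W i j * p i j)
      = (\<Sum>j<n. W i j * (p i j - (if j = \<sigma> i then \<theta> else 0))) + \<theta> * W i (\<sigma> i)" if "i < n" for i
  proof -
    have "(\<Sum>j<n. W i j * p i j)
        = (\<Sum>j<n. W i j * (p i j - (if j = \<sigma> i then \<theta> else 0)) + (if j = \<sigma> i then \<theta> * W i j else 0))"
      by (intro sum.cong) (auto simp: algebra_simps)
    then show ?thesis using permutes_in_image[OF assms, of i] that by (simp add: sum.distrib)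
  qed
  then show ?thesis by (simp add: sum.distrib sum_distrib_left)
qed

lemma add_mult_le_mult_max:
  fixes s t a b :: real
  assumes "0 \<le> s" "0 \<le> t"
  shows "s * a + t * b \<le> (s + t) * max a b"
proof -
  have "s * a \<le> s * max a b" "t * b \<le> t * max a b"
    using assms by (simp_all add: mult_left_mono)
  then show ?thesis by (simp add: distrib_right)
qed

theorem scaled_doubly_stochastic_weighted_sum_le:
  assumes "scaled_doubly_stochastic n c p"
  shows "\<exists>\<sigma>. \<sigma> permutes {..<n} \<and> (\<Sum>i<n. \<Sum>j<n. W i j * p i j) \<le> c * (\<Sum>i<n. W i (\<sigma> i))"
  using assms
proof (induction "card {(i, j). i < n \<and> j < n \<and> p i j \<noteq> 0}" arbitrary: p c rule: less_induct)
  case less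
  define S where "S \<pi> = (\<Sum>i<n. W i (\<pi> i))" for \<pi> :: "nat \<Rightarrow> nat"
  consider "n = 0" | "0 < n" "c = 0" | "0 < n" "0 < c"
    using scaled_doubly_stochastic_sum_nonneg[OF less.prems] by linarith
  then show ?case
  proof cases
    case 1
    then show ?thesis using permutes_id by fastforce
  next
    case 2
    then have "(\<Sum>i<n. \<Sum>j<n. W i j * p i j) = 0"
      using less.prems by (auto intro!: sum.neutral simp: scaled_doubly_stochastic_zero)
    then show ?thesis using 2 permutes_id by fastforce
  next
    case 3
    obtain \<sigma> \<theta> where \<sigma>: "\<sigma> permutes {..<n}" and "0 < \<theta>"
      and q: "scaled_doubly_stochastic n (c - \<theta>) (\<lambda>i j. p i j - (if j = \<sigma> i then \<theta> else 0))"
      and smaller: "card {(i, j). i < n \<and> j < n \<and> p i j - (if j = \<sigma> i then \<theta> else 0) \<noteq> 0}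
        < card {(i, j). i < n \<and> j < n \<and> p i j \<noteq> 0}"
      using scaled_doubly_stochastic_peel[OF less.prems 3] by blast
    obtain \<tau> where \<tau>: "\<tau> permutes {..<n}"
      "(\<Sum>i<n. \<Sum>j<n. W i j * (p i j - (if j = \<sigma> i then \<theta> else 0))) \<le> (c - \<theta>) * S \<tau>"
      using less.hyps[OF smaller q] unfolding S_def by blast
    have "(\<Sum>i<n. \<Sum>j<n. W i j * p i j) \<le> (c - \<theta>) * S \<tau> + \<theta> * S \<sigma>"
      using weighted_sum_split_permutation[OF \<sigma>, of W p \<theta>] \<tau>(2) by (simp add: S_def)
    also have "\<dots> \<le> c * max (S \<tau>) (S \<sigma>)"
      using add_mult_le_mult_max[of "c - \<theta>" \<theta>] scaled_doubly_stochastic_sum_nonneg[OF q 3(1)] \<open>0 < \<theta>\<close>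
      by simp
    finally have bound: "(\<Sum>i<n. \<Sum>j<n. W i j * p i j) \<le> c * max (S \<tau>) (S \<sigma>)" .
    show ?thesis
    proof (cases "S \<sigma> \<le> S \<tau>")
      case True
      then show ?thesis using bound \<tau>(1) by (intro exI[of _ \<tau>]) (simp add: max_absorb1 S_def)
    next
      case False
      then show ?thesis using bound \<sigma> by (intro exI[of _ \<sigma>]) (simp add: max_absorb2 S_def)
    qed
  qed
qed

locale tracial_star_algebra =
  fixes A :: "'a salg" and tau :: "'a \<Rightarrow> complex"
  assumes star_algebra: "star_algebra A"
    and tau_linear: "bdd_lin_functional A tau"
    and tau_commute: "x \<in> acar A \<Longrightarrow> y \<in> acar A \<Longrightarrow> tau (amul A x y) = tau (amul A y x)"
    and tau_positive: "x \<in> acar A \<Longrightarrow>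
      Im (tau (amul A (astar A x) x)) = 0 \<and> 0 \<le> Re (tau (amul A (astar A x) x))"
    and tau_aone: "tau (aone A) = 1"

lemma finite_factor_with_trace_tracial_star_algebra:
  assumes "finite_factor_with_trace N tau"
  shows "tracial_star_algebra N tau"
proof -
  have "star_algebra N" "faithful_normal_tracial_state N tau"
    using assms unfolding finite_factor_with_trace_def factor_def wstar_algebra_def cstar_algebra_def
    by blast+
  then show ?thesis by unfold_locales (auto simp: faithful_normal_tracial_state_def)
qed

context tracial_star_algebra
begin

lemma azero_closed [simp]: "azero A \<in> acar A"
  and aone_closed [simp]: "aone A \<in> acar A"
  and aadd_closed [simp]: "x \<in> acar A \<Longrightarrow> y \<in> acar A \<Longrightarrow> aadd A x y \<in> acar A"
  and amul_closed [simp]: "x \<in> acar A \<Longrightarrow> y \<in> acar A \<Longrightarrow> amul A x y \<in> acar A"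
  and asc_closed [simp]: "x \<in> acar A \<Longrightarrow> asc A c x \<in> acar A"
  and astar_closed [simp]: "x \<in> acar A \<Longrightarrow> astar A x \<in> acar A"
  using star_algebra unfolding star_algebra_def by auto

lemma aadd_assoc: "x \<in> acar A \<Longrightarrow> y \<in> acar A \<Longrightarrow> z \<in> acar A \<Longrightarrow>
    aadd A (aadd A x y) z = aadd A x (aadd A y z)"
  and aadd_commute: "x \<in> acar A \<Longrightarrow> y \<in> acar A \<Longrightarrow> aadd A x y = aadd A y x"
  and aadd_azero [simp]: "x \<in> acar A \<Longrightarrow> aadd A x (azero A) = x"
  and aadd_neg: "x \<in> acar A \<Longrightarrow> aadd A x (asc A (-1) x) = azero A"
  and asc_asc [simp]: "x \<in> acar A \<Longrightarrow> asc A a (asc A b x) = asc A (a * b) x"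
  and asc_distrib_left: "x \<in> acar A \<Longrightarrow> asc A (a + b) x = aadd A (asc A a x) (asc A b x)"
  and asc_distrib_right: "x \<in> acar A \<Longrightarrow> y \<in> acar A \<Longrightarrow>
    asc A a (aadd A x y) = aadd A (asc A a x) (asc A a y)"
  and amul_assoc: "x \<in> acar A \<Longrightarrow> y \<in> acar A \<Longrightarrow> z \<in> acar A \<Longrightarrow>
    amul A (amul A x y) z = amul A x (amul A y z)"
  and aone_amul [simp]: "x \<in> acar A \<Longrightarrow> amul A (aone A) x = x"
  and amul_aone [simp]: "x \<in> acar A \<Longrightarrow> amul A x (aone A) = x"
  and amul_distrib_left: "x \<in> acar A \<Longrightarrow> y \<in> acar A \<Longrightarrow> z \<in> acar A \<Longrightarrow>
    amul A x (aadd A y z) = aadd A (amul A x y) (amul A x z)"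
  and amul_distrib_right: "x \<in> acar A \<Longrightarrow> y \<in> acar A \<Longrightarrow> z \<in> acar A \<Longrightarrow>
    amul A (aadd A x y) z = aadd A (amul A x z) (amul A y z)"
  and amul_asc_left [simp]: "x \<in> acar A \<Longrightarrow> y \<in> acar A \<Longrightarrow> amul A (asc A a x) y = asc A a (amul A x y)"
  and amul_asc_right [simp]: "x \<in> acar A \<Longrightarrow> y \<in> acar A \<Longrightarrow> amul A x (asc A a y) = asc A a (amul A x y)"
  and astar_astar [simp]: "x \<in> acar A \<Longrightarrow> astar A (astar A x) = x"
  and astar_aadd: "x \<in> acar A \<Longrightarrow> y \<in> acar A \<Longrightarrow> astar A (aadd A x y) = aadd A (astar A x) (astar A y)"
  and astar_asc [simp]: "x \<in> acar A \<Longrightarrow> astar A (asc A a x) = asc A (cnj a) (astar A x)"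
  and astar_amul: "x \<in> acar A \<Longrightarrow> y \<in> acar A \<Longrightarrow> astar A (amul A x y) = amul A (astar A y) (astar A x)"
  using star_algebra unfolding star_algebra_def by auto

lemma azero_aadd [simp]: "x \<in> acar A \<Longrightarrow> aadd A (azero A) x = x"
  using aadd_commute[of x "azero A"] by simp

lemma aadd_aadd_swap:
  "w \<in> acar A \<Longrightarrow> x \<in> acar A \<Longrightarrow> y \<in> acar A \<Longrightarrow> z \<in> acar A \<Longrightarrow>
    aadd A (aadd A w x) (aadd A y z) = aadd A (aadd A w y) (aadd A x z)"
  by (metis aadd_assoc aadd_closed aadd_commute)

lemma aadd_left_cancel:
  assumes "x \<in> acar A" "y \<in> acar A" "z \<in> acar A" "aadd A x y = aadd A x z"
  shows "y = z"
proof -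
  have "aadd A (asc A (-1) x) x = azero A"
    using aadd_neg[of x] aadd_commute[of x "asc A (-1) x"] assms(1) by simp
  moreover have "aadd A (asc A (-1) x) (aadd A x y) = aadd A (asc A (-1) x) (aadd A x z)"
    using assms(4) by simp
  ultimately show ?thesis using assms(1-3) by (simp flip: aadd_assoc)
qed

lemma asc_zero [simp]: "x \<in> acar A \<Longrightarrow> asc A 0 x = azero A"
  using asc_distrib_left[of x 0 0] aadd_left_cancel[of "asc A 0 x" "azero A" "asc A 0 x"] by simp

lemma asc_azero [simp]: "asc A c (azero A) = azero A"
  using asc_distrib_right[of "azero A" "azero A" c]
    aadd_left_cancel[of "asc A c (azero A)" "azero A" "asc A c (azero A)"] by simp

lemma amul_azero [simp]: "x \<in> acar A \<Longrightarrow> amul A x (azero A) = azero A"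
  using amul_distrib_left[of x "azero A" "azero A"]
    aadd_left_cancel[of "amul A x (azero A)" "azero A" "amul A x (azero A)"] by simp

lemma azero_amul [simp]: "x \<in> acar A \<Longrightarrow> amul A (azero A) x = azero A"
  using amul_distrib_right[of "azero A" "azero A" x]
    aadd_left_cancel[of "amul A (azero A) x" "azero A" "amul A (azero A) x"] by simp

lemma astar_azero [simp]: "astar A (azero A) = azero A"
  using astar_asc[of "azero A" 0] by simp

lemma astar_aone [simp]: "astar A (aone A) = aone A"
  using astar_amul[of "astar A (aone A)" "aone A"] by simp

lemma tau_aadd: "x \<in> acar A \<Longrightarrow> y \<in> acar A \<Longrightarrow> tau (aadd A x y) = tau x + tau y"
  and tau_asc: "x \<in> acar A \<Longrightarrow> tau (asc A c x) = c * tau x"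
  using tau_linear unfolding bdd_lin_functional_def by blast+

lemma tau_azero [simp]: "tau (azero A) = 0"
  using tau_asc[of "azero A" 0] by simp

lemma asum_closed [simp]: "(\<And>k. k < m \<Longrightarrow> f k \<in> acar A) \<Longrightarrow> asum A f m \<in> acar A"
  by (induction m) auto

lemma asum_cong: "(\<And>k. k < m \<Longrightarrow> f k = g k) \<Longrightarrow> asum A f m = asum A g m"
  by (induction m) auto

lemma asum_azero: "(\<And>k. k < m \<Longrightarrow> f k = azero A) \<Longrightarrow> asum A f m = azero A"
  by (induction m) auto

lemma asum_delta:
  assumes "k0 < m" "f k0 \<in> acar A" "\<And>k. k < m \<Longrightarrow> k \<noteq> k0 \<Longrightarrow> f k = azero A"
  shows "asum A f m = f k0"
  using assms
proof (induction m)
  case (Suc m)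
  show ?case
  proof (cases "k0 = m")
    case True
    then have "asum A f m = azero A" using Suc.prems by (intro asum_azero) auto
    then show ?thesis using True Suc.prems by simp
  next
    case False
    then show ?thesis using Suc by auto
  qed
qed simp

lemma asum_aadd:
  "(\<And>k. k < m \<Longrightarrow> f k \<in> acar A) \<Longrightarrow> (\<And>k. k < m \<Longrightarrow> g k \<in> acar A) \<Longrightarrow>
    asum A (\<lambda>k. aadd A (f k) (g k)) m = aadd A (asum A f m) (asum A g m)"
  by (induction m) (auto simp: aadd_aadd_swap)

lemma asc_asum: "(\<And>k. k < m \<Longrightarrow> f k \<in> acar A) \<Longrightarrow> asc A c (asum A f m) = asum A (\<lambda>k. asc A c (f k)) m"
  by (induction m) (auto simp: asc_distrib_right)

lemma asum_distrib_left:
  "x \<in> acar A \<Longrightarrow> (\<And>k. k < m \<Longrightarrow> f k \<in> acar A) \<Longrightarrow>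
    amul A x (asum A f m) = asum A (\<lambda>k. amul A x (f k)) m"
  by (induction m) (auto simp: amul_distrib_left)

lemma asum_distrib_right:
  "x \<in> acar A \<Longrightarrow> (\<And>k. k < m \<Longrightarrow> f k \<in> acar A) \<Longrightarrow>
    amul A (asum A f m) x = asum A (\<lambda>k. amul A (f k) x) m"
  by (induction m) (auto simp: amul_distrib_right)

lemma astar_asum: "(\<And>k. k < m \<Longrightarrow> f k \<in> acar A) \<Longrightarrow> astar A (asum A f m) = asum A (\<lambda>k. astar A (f k)) m"
  by (induction m) (auto simp: astar_aadd)

lemma tau_asum: "(\<And>k. k < m \<Longrightarrow> f k \<in> acar A) \<Longrightarrow> tau (asum A f m) = (\<Sum>k<m. tau (f k))"
  by (induction m) (auto simp: tau_aadd)

lemma mats_entry_closed: "u \<in> mats A n \<Longrightarrow> i < n \<Longrightarrow> j < n \<Longrightarrow> u i j \<in> acar A"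
  unfolding mats_def by (auto dest: spec[of _ i])

lemma munitaries_mats: "u \<in> munitaries A n \<Longrightarrow> u \<in> mats A n"
  by (simp add: munitaries_def)

lemma unitary_columns_orthonormal:
  assumes "u \<in> munitaries A n" "i < n" "j < n"
  shows "asum A (\<lambda>k. amul A (astar A (u k i)) (u k j)) n = (if i = j then aone A else azero A)"
proof -
  have "mmul A n (madj A n u) u i j = mone A n i j" using assms(1) by (simp add: munitaries_def)
  moreover have "mmul A n (madj A n u) u i j = asum A (\<lambda>k. amul A (astar A (u k i)) (u k j)) n"
    using assms(2,3) by (simp add: mmul_def madj_def cong: asum_cong)
  ultimately show ?thesis using assms(2,3) by (simp add: mone_def)
qed

lemma unitary_rows_orthonormal:
  assumes "u \<in> munitaries A n" "i < n" "j < n"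
  shows "asum A (\<lambda>k. amul A (u i k) (astar A (u j k))) n = (if i = j then aone A else azero A)"
proof -
  have "mmul A n u (madj A n u) i j = mone A n i j" using assms(1) by (simp add: munitaries_def)
  moreover have "mmul A n u (madj A n u) i j = asum A (\<lambda>k. amul A (u i k) (astar A (u j k))) n"
    using assms(2,3) by (simp add: mmul_def madj_def cong: asum_cong)
  ultimately show ?thesis using assms(2,3) by (simp add: mone_def)
qed

lemma tau_astar_asum_asum:
  assumes x: "\<And>k. k < m \<Longrightarrow> x k \<in> acar A"
  shows "tau (amul A (astar A (asum A x m)) (asum A x m))
    = (\<Sum>k<m. \<Sum>l<m. tau (amul A (astar A (x k)) (x l)))"
proof -
  have "amul A (astar A (asum A x m)) (asum A x m)
      = asum A (\<lambda>k. amul A (astar A (x k)) (asum A x m)) m"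
    using x by (simp add: astar_asum asum_distrib_right)
  also have "\<dots> = asum A (\<lambda>k. asum A (\<lambda>l. amul A (astar A (x k)) (x l)) m) m"
    using x by (intro asum_cong asum_distrib_left) auto
  finally have "tau (amul A (astar A (asum A x m)) (asum A x m))
      = (\<Sum>k<m. tau (asum A (\<lambda>l. amul A (astar A (x k)) (x l)) m))"
    using x by (simp add: tau_asum)
  also have "\<dots> = (\<Sum>k<m. \<Sum>l<m. tau (amul A (astar A (x k)) (x l)))"
    using x by (intro sum.cong refl tau_asum) auto
  finally show ?thesis .
qed

lemma unitary_column_norm_invariant:
  assumes u: "u \<in> munitaries A n" and c: "\<And>k. k < n \<Longrightarrow> c k \<in> acar A"
  shows "(\<Sum>i<n. tau (amul A (astar A (asum A (\<lambda>k. amul A (astar A (u k i)) (c k)) n))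
                              (asum A (\<lambda>k. amul A (astar A (u k i)) (c k)) n)))
       = (\<Sum>k<n. tau (amul A (astar A (c k)) (c k)))"
proof -
  have uc: "u i k \<in> acar A" if "i < n" "k < n" for i k
    using mats_entry_closed[OF munitaries_mats[OF u] that] .
  have sandwich: "tau (amul A (astar A (amul A (astar A (u k i)) (c k))) (amul A (astar A (u l i)) (c l)))
      = tau (amul A (astar A (c k)) (amul A (amul A (u k i) (astar A (u l i))) (c l)))"
    if "i < n" "k < n" "l < n" for i k l
    using that uc c by (simp add: astar_amul amul_assoc)
  have contract: "(\<Sum>i<n. tau (amul A (astar A (c k)) (amul A (amul A (u k i) (astar A (u l i))) (c l))))
      = tau (amul A (astar A (c k)) (amul A (if k = l then aone A else azero A) (c l)))"
    if "k < n" "l < n" for k l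
  proof -
    have "(\<Sum>i<n. tau (amul A (astar A (c k)) (amul A (amul A (u k i) (astar A (u l i))) (c l))))
        = tau (amul A (astar A (c k))
            (amul A (asum A (\<lambda>i. amul A (u k i) (astar A (u l i))) n) (c l)))"
      using that uc c by (simp add: tau_asum asum_distrib_left asum_distrib_right)
    then show ?thesis using unitary_rows_orthonormal[OF u that] by simp
  qed
  have "(\<Sum>i<n. tau (amul A (astar A (asum A (\<lambda>k. amul A (astar A (u k i)) (c k)) n))
                              (asum A (\<lambda>k. amul A (astar A (u k i)) (c k)) n)))
      = (\<Sum>i<n. \<Sum>k<n. \<Sum>l<n. tau (amul A (astar A (c k)) (amul A (amul A (u k i) (astar A (u l i))) (c l))))"
    using uc c by (intro sum.cong refl) (simp add: tau_astar_asum_asum sandwich)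
  also have "\<dots> = (\<Sum>k<n. \<Sum>l<n. \<Sum>i<n. tau (amul A (astar A (c k)) (amul A (amul A (u k i) (astar A (u l i))) (c l))))"
    by (subst sum.swap) (intro sum.cong refl sum.swap)
  also have "\<dots> = (\<Sum>k<n. \<Sum>l<n. if k = l then tau (amul A (astar A (c k)) (c k)) else 0)"
    using c by (intro sum.cong refl) (simp add: contract)
  also have "\<dots> = (\<Sum>k<n. tau (amul A (astar A (c k)) (c k)))" by simp
  finally show ?thesis .
qed

lemma diag_tensor_one_mmul:
  assumes "u \<in> mats A n" "k < n" "j < n"
  shows "mmul A n (diag_tensor_one A n lam) u k j = asc A (lam k) (u k j)"
proof -
  have "mmul A n (diag_tensor_one A n lam) u k j
      = asum A (\<lambda>m. amul A (diag_tensor_one A n lam k m) (u m j)) n"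
    using assms(2,3) by (simp add: mmul_def)
  also have "\<dots> = amul A (diag_tensor_one A n lam k k) (u k j)"
    using assms mats_entry_closed by (intro asum_delta) (auto simp: diag_tensor_one_def)
  finally show ?thesis using assms mats_entry_closed by (simp add: diag_tensor_one_def)
qed

lemma diag_tensor_one_commutator_entry:
  assumes u: "u \<in> munitaries A n" and ij: "i < n" "j < n"
  shows "msub A n (diag_tensor_one A n lam)
           (mmul A n (madj A n u) (mmul A n (diag_tensor_one A n lam) u)) i j
    = asum A (\<lambda>k. amul A (astar A (u k i)) (asc A (lam j - lam k) (u k j))) n"
proof -
  have uc: "u k l \<in> acar A" if "k < n" "l < n" for k l
    using mats_entry_closed[OF munitaries_mats[OF u] that] .
  define Z where "Z k = amul A (astar A (u k i)) (u k j)" for k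
  have Zc: "Z k \<in> acar A" if "k < n" for k using uc that ij by (simp add: Z_def)
  have "mmul A n (madj A n u) (mmul A n (diag_tensor_one A n lam) u) i j
      = asum A (\<lambda>k. amul A (astar A (u k i)) (mmul A n (diag_tensor_one A n lam) u k j)) n"
    using ij by (simp add: mmul_def madj_def cong: asum_cong)
  also have "\<dots> = asum A (\<lambda>k. asc A (lam k) (Z k)) n"
    using ij uc by (intro asum_cong) (simp add: diag_tensor_one_mmul[OF munitaries_mats[OF u]] Z_def)
  finally have uau: "mmul A n (madj A n u) (mmul A n (diag_tensor_one A n lam) u) i j
      = asum A (\<lambda>k. asc A (lam k) (Z k)) n" .
  have "asum A (\<lambda>k. amul A (astar A (u k i)) (asc A (lam j - lam k) (u k j))) n
      = asum A (\<lambda>k. aadd A (asc A (lam j) (Z k)) (asc A (-1) (asc A (lam k) (Z k)))) n"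
    using uc ij Zc asc_distrib_left[of "Z _" "lam j" "- lam _"] by (intro asum_cong) (simp add: Z_def)
  also have "\<dots> = aadd A (asc A (lam j) (asum A Z n)) (asc A (-1) (asum A (\<lambda>k. asc A (lam k) (Z k)) n))"
    using Zc by (simp add: asum_aadd asc_asum)
  also have "asc A (lam j) (asum A Z n) = diag_tensor_one A n lam i j"
    using unitary_columns_orthonormal[OF u ij] ij by (simp add: Z_def[abs_def] diag_tensor_one_def)
  finally show ?thesis using uau ij by (simp add: msub_def asub_def)
qed

definition entry_weight :: "(nat \<Rightarrow> nat \<Rightarrow> 'a) \<Rightarrow> nat \<Rightarrow> nat \<Rightarrow> real" where
  "entry_weight u k j = Re (tau (amul A (astar A (u k j)) (u k j)))"

lemma tau_astar_self_of_real:
  "x \<in> acar A \<Longrightarrow> tau (amul A (astar A x) x) = of_real (Re (tau (amul A (astar A x) x)))"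
  using tau_positive[of x] by (simp add: complex_eq_iff)

lemma tau_astar_asc_self:
  assumes "x \<in> acar A"
  shows "tau (amul A (astar A (asc A z x)) (asc A z x))
    = of_real ((cmod z)\<^sup>2 * Re (tau (amul A (astar A x) x)))"
proof -
  have "tau (amul A (astar A (asc A z x)) (asc A z x)) = (cnj z * z) * tau (amul A (astar A x) x)"
    using assms by (simp add: tau_asc)
  also have "cnj z * z = of_real ((cmod z)\<^sup>2)"
    by (metis complex_norm_square mult.commute of_real_power)
  finally show ?thesis using tau_astar_self_of_real[OF assms] by (metis of_real_mult)
qed

lemma diag_tensor_one_commutator_column:
  fixes lam :: "nat \<Rightarrow> complex"
  assumes u: "u \<in> munitaries A n" and j: "j < n"
  defines "b \<equiv> msub A n (diag_tensor_one A n lam)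
    (mmul A n (madj A n u) (mmul A n (diag_tensor_one A n lam) u))"
  shows "tau (mmul A n (madj A n b) b j j)
    = of_real (\<Sum>k<n. (cmod (lam j - lam k))\<^sup>2 * entry_weight u k j)"
proof -
  have uc: "u k l \<in> acar A" if "k < n" "l < n" for k l
    using mats_entry_closed[OF munitaries_mats[OF u] that] .
  define c where "c k = asc A (lam j - lam k) (u k j)" for k
  have cc: "c k \<in> acar A" if "k < n" for k using uc that j by (simp add: c_def)
  have b: "b i j = asum A (\<lambda>k. amul A (astar A (u k i)) (c k)) n" if "i < n" for i
    using diag_tensor_one_commutator_entry[OF u that j] by (simp add: b_def c_def)
  have "tau (mmul A n (madj A n b) b j j) = (\<Sum>i<n. tau (amul A (astar A (b i j)) (b i j)))"
    using j b uc cc by (simp add: mmul_def madj_def tau_asum cong: asum_cong)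
  also have "\<dots> = (\<Sum>k<n. tau (amul A (astar A (c k)) (c k)))"
    using b cc by (simp add: unitary_column_norm_invariant[OF u])
  also have "\<dots> = (\<Sum>k<n. of_real ((cmod (lam j - lam k))\<^sup>2 * entry_weight u k j))"
    unfolding c_def entry_weight_def using uc j by (intro sum.cong refl tau_astar_asc_self) auto
  finally show ?thesis by (simp add: of_real_sum)
qed

lemma comm_dist_diag_tensor_one:
  assumes u: "u \<in> munitaries A n"
  shows "comm_dist A tau n (diag_tensor_one A n lam) u
    = sqrt ((\<Sum>k<n. \<Sum>j<n. (cmod (lam j - lam k))\<^sup>2 * entry_weight u k j) / real n)"
proof -
  have "(\<Sum>j<n. \<Sum>k<n. (cmod (lam j - lam k))\<^sup>2 * entry_weight u k j)
      = (\<Sum>k<n. \<Sum>j<n. (cmod (lam j - lam k))\<^sup>2 * entry_weight u k j)"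
    by (rule sum.swap)
  then show ?thesis
    using diag_tensor_one_commutator_column[OF u]
    by (simp add: comm_dist_def mnorm2_def mtau_def of_real_sum)
qed

lemma unitary_entry_weight_doubly_stochastic:
  assumes u: "u \<in> munitaries A n"
  shows "scaled_doubly_stochastic n 1 (entry_weight u)"
proof -
  have uc: "u k l \<in> acar A" if "k < n" "l < n" for k l
    using mats_entry_closed[OF munitaries_mats[OF u] that] .
  have row: "(\<Sum>j<n. tau (amul A (astar A (u k j)) (u k j))) = 1" if k: "k < n" for k
  proof -
    have "(\<Sum>j<n. tau (amul A (astar A (u k j)) (u k j))) = (\<Sum>j<n. tau (amul A (u k j) (astar A (u k j))))"
      using uc k tau_commute by (intro sum.cong) auto
    also have "\<dots> = tau (asum A (\<lambda>j. amul A (u k j) (astar A (u k j))) n)"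
      using uc k by (simp add: tau_asum)
    finally show ?thesis using unitary_rows_orthonormal[OF u k k] by (simp add: tau_aone)
  qed
  have column: "(\<Sum>k<n. tau (amul A (astar A (u k j)) (u k j))) = 1" if j: "j < n" for j
  proof -
    have "(\<Sum>k<n. tau (amul A (astar A (u k j)) (u k j))) = tau (asum A (\<lambda>k. amul A (astar A (u k j)) (u k j)) n)"
      using uc j by (simp add: tau_asum)
    then show ?thesis using unitary_columns_orthonormal[OF u j j] by (simp add: tau_aone)
  qed
  show ?thesis
    using tau_positive uc row column
    by (simp add: scaled_doubly_stochastic_def entry_weight_def flip: Re_sum)
qed

lemma perm_tensor_one_unitary:
  assumes \<sigma>: "\<sigma> permutes {..<n}"
  shows "perm_tensor_one A n \<sigma> \<in> munitaries A n"
proof -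
  let ?P = "perm_tensor_one A n \<sigma>"
  have \<sigma>_less: "\<sigma> i < n" "inv \<sigma> i < n" if "i < n" for i
    using permutes_in_image[OF \<sigma>] permutes_in_image[OF permutes_inv[OF \<sigma>]] that by auto
  have \<sigma>_inv: "\<sigma> (inv \<sigma> i) = i" "inv \<sigma> (\<sigma> i) = i" for i
    using permutes_inverses[OF \<sigma>] by auto
  have "mmul A n (madj A n ?P) ?P i j = mone A n i j" for i j
  proof (cases "i < n \<and> j < n")
    case True
    have "mmul A n (madj A n ?P) ?P i j = asum A (\<lambda>k. amul A (astar A (?P k i)) (?P k j)) n"
      using True by (simp add: mmul_def madj_def cong: asum_cong)
    also have "\<dots> = amul A (astar A (?P (inv \<sigma> i) i)) (?P (inv \<sigma> i) j)"
      using True \<sigma>_less \<sigma>_inv by (intro asum_delta) (auto simp: perm_tensor_one_def)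
    finally show ?thesis using True \<sigma>_less \<sigma>_inv by (auto simp: perm_tensor_one_def mone_def)
  qed (auto simp: mmul_def mone_def)
  moreover have "mmul A n ?P (madj A n ?P) i j = mone A n i j" for i j
  proof (cases "i < n \<and> j < n")
    case True
    have "mmul A n ?P (madj A n ?P) i j = asum A (\<lambda>k. amul A (?P i k) (astar A (?P j k))) n"
      using True by (simp add: mmul_def madj_def cong: asum_cong)
    also have "\<dots> = amul A (?P i (\<sigma> i)) (astar A (?P j (\<sigma> i)))"
      using True \<sigma>_less by (intro asum_delta) (auto simp: perm_tensor_one_def)
    finally show ?thesis
      using True \<sigma>_less permutes_inj[OF \<sigma>] by (auto simp: perm_tensor_one_def mone_def inj_def)
  qed (auto simp: mmul_def mone_def)
  moreover have "?P \<in> mats A n" by (simp add: mats_def perm_tensor_one_def)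
  ultimately show ?thesis by (simp add: munitaries_def fun_eq_iff)
qed

lemma comm_dist_diag_tensor_one_perm:
  assumes \<sigma>: "\<sigma> permutes {..<n}"
  shows "comm_dist A tau n (diag_tensor_one A n lam) (perm_tensor_one A n \<sigma>)
     = sqrt ((\<Sum>k<n. (cmod (lam (\<sigma> k) - lam k))\<^sup>2) / real n)"
proof -
  have "entry_weight (perm_tensor_one A n \<sigma>) k j = (if j = \<sigma> k then 1 else 0)" if "k < n" "j < n" for k j
    using that by (simp add: entry_weight_def perm_tensor_one_def tau_aone)
  then have "(\<Sum>j<n. (cmod (lam j - lam k))\<^sup>2 * entry_weight (perm_tensor_one A n \<sigma>) k j)
      = (cmod (lam (\<sigma> k) - lam k))\<^sup>2" if "k < n" for k
    using permutes_in_image[OF \<sigma>, of k] that by (simp add: if_distrib[of "(*) _"] cong: if_cong)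
  then show ?thesis
    by (simp add: comm_dist_diag_tensor_one[OF perm_tensor_one_unitary[OF \<sigma>]])
qed

lemma comm_dist_diag_tensor_one_le_perm:
  assumes u: "u \<in> munitaries A n"
  obtains \<sigma> where "\<sigma> permutes {..<n}"
    "comm_dist A tau n (diag_tensor_one A n lam) u
       \<le> comm_dist A tau n (diag_tensor_one A n lam) (perm_tensor_one A n \<sigma>)"
proof -
  let ?W = "\<lambda>k j. (cmod (lam j - lam k))\<^sup>2"
  obtain \<sigma> where \<sigma>: "\<sigma> permutes {..<n}"
    and le: "(\<Sum>k<n. \<Sum>j<n. ?W k j * entry_weight u k j) \<le> 1 * (\<Sum>k<n. ?W k (\<sigma> k))"
    using scaled_doubly_stochastic_weighted_sum_le[OF unitary_entry_weight_doubly_stochastic[OF u],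
        where W = ?W] by blast
  have "comm_dist A tau n (diag_tensor_one A n lam) u \<le> sqrt ((\<Sum>k<n. ?W k (\<sigma> k)) / real n)"
    unfolding comm_dist_diag_tensor_one[OF u] using le by (intro real_sqrt_le_mono divide_right_mono) auto
  also have "\<dots> = comm_dist A tau n (diag_tensor_one A n lam) (perm_tensor_one A n \<sigma>)"
    by (rule comm_dist_diag_tensor_one_perm[OF \<sigma>, symmetric])
  finally show thesis by (rule that[OF \<sigma>])
qed

end

lemma cSUP_eq_Max_dominating:
  fixes g :: "'b \<Rightarrow> real"
  assumes "finite V" "V \<noteq> {}" "V \<subseteq> g ` U" "\<forall>u\<in>U. \<exists>v\<in>V. g u \<le> v"
  shows "(SUP u\<in>U. g u) = Max V"
proof (rule cSup_eq_maximum)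
  show "Max V \<in> g ` U" using assms(1-3) Max_in by blast
  show "x \<le> Max V" if "x \<in> g ` U" for x
    using that assms(1,4) by (auto intro: order.trans[OF _ Max_ge])
qed

theorem proposition5p5:
  fixes N :: "'a salg" and tauN :: "'a \<Rightarrow> complex" and n :: nat and lam :: "nat \<Rightarrow> complex"
    and a :: "nat \<Rightarrow> nat \<Rightarrow> 'a"
  assumes "finite_factor_with_trace N tauN"
    and "n \<ge> 1"
    and "a = diag_tensor_one N n lam"
  shows "(SUP u \<in> munitaries N n. comm_dist N tauN n a u)
       = Max ((\<lambda>\<sigma>. comm_dist N tauN n a (perm_tensor_one N n \<sigma>)) ` {\<sigma>. \<sigma> permutes {..<n}})"
proof (rule cSUP_eq_Max_dominating)
  interpret tracial_star_algebra N tauN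
    using assms(1) by (rule finite_factor_with_trace_tracial_star_algebra)
  let ?V = "(\<lambda>\<sigma>. comm_dist N tauN n a (perm_tensor_one N n \<sigma>)) ` {\<sigma>. \<sigma> permutes {..<n}}"
  show "finite ?V" using finite_permutations[of "{..<n}"] by simp
  show "?V \<noteq> {}" using permutes_id[of "{..<n}"] by blast
  show "?V \<subseteq> comm_dist N tauN n a ` munitaries N n" using perm_tensor_one_unitary by auto
  show "\<forall>u\<in>munitaries N n. \<exists>v\<in>?V. comm_dist N tauN n a u \<le> v"
    using comm_dist_diag_tensor_one_le_perm assms(3) by blast
qed

end
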